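(* Let $\Gamma=(G,\sigma)$, $G=(V,E)$, be a connected signed graph. Then there exists a real symmetric matrix $M$ compatible with $\Gamma$ such that the smallest eigenvalue $\lambda_1$ of $M$ is simple and a corresponding eigenfunction $f_1$ is nonzero at every vertex. In particular, $\mathfrak{S}(f_1)=1$ and the strong nodal domain of $f_1$ is the whole graph $G$.
   Context: A signed graph $\Gamma=(G,\sigma)$ is a finite simple undirected graph $G=(V,E)$ with $\sigma:E\to\{+1,-1\}$. The induced signed graph of a real symmetric $n\times n$ matrix $M$ has vertices $x_1,\dots,x_n$, edge $\{x_i,x_j\}$ iff $i\ne j$ and $M_{ij}\ne0$, sign $-M_{ij}/|M_{ij}|$; $M$ is compatible with $\Gamma$ if its induced signed graph is $\Gamma$. A walk is $y_1,\dots,y_m$ ($m\ge2$) with consecutive vertices adjacent; for $f:V\to\mathbb R$ an S-walk is a walk with $f(y_j)\sigma_{y_jy_{j+1}}f(y_{j+1})>0$ for all $j$. The strong nodal domains of $f$ are the induced subgraphs on the equivalence classes of the relation on $\{x:f(x)\ne0\}$ "$x=y$ or an S-walk connects $x$ and $y$"; $\mathfrak{S}(f)$ is their number. *)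

theory Defs
  imports "HOL-Analysis.Analysis" "HOL-Computational_Algebra.Polynomial"
begin

text \<open>Signed graphs on the finite vertex type 'n (vertices = UNIV).
  E is the (symmetric, irreflexive) adjacency relation, sg the sign function on edges.\<close>

definition signed_graph :: "('n::finite \<Rightarrow> 'n \<Rightarrow> bool) \<Rightarrow> ('n \<Rightarrow> 'n \<Rightarrow> real) \<Rightarrow> bool" where
  "signed_graph E sg \<longleftrightarrow> (\<forall>x y. E x y \<longrightarrow> E y x) \<and> (\<forall>x. \<not> E x x) \<and>
     (\<forall>x y. E x y \<longrightarrow> sg x y = sg y x \<and> (sg x y = 1 \<or> sg x y = -1))"

definition connected_graph :: "('n \<Rightarrow> 'n \<Rightarrow> bool) \<Rightarrow> bool" where
  "connected_graph E \<longleftrightarrow> (\<forall>x y. E\<^sup>*\<^sup>* x y)"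

definition symmetric_matrix :: "real^'n^'n \<Rightarrow> bool" where
  "symmetric_matrix M \<longleftrightarrow> transpose M = M"

definition compatible :: "real^'n^'n \<Rightarrow> ('n \<Rightarrow> 'n \<Rightarrow> bool) \<Rightarrow> ('n \<Rightarrow> 'n \<Rightarrow> real) \<Rightarrow> bool" where
  "compatible M E sg \<longleftrightarrow>
     (\<forall>i j. E i j \<longleftrightarrow> (i \<noteq> j \<and> M $ i $ j \<noteq> 0)) \<and>
     (\<forall>i j. E i j \<longrightarrow> sg i j = - (M $ i $ j / \<bar>M $ i $ j\<bar>))"

definition is_eigenvalue :: "real^'n^'n \<Rightarrow> real \<Rightarrow> bool" where
  "is_eigenvalue M l \<longleftrightarrow> (\<exists>v. v \<noteq> 0 \<and> M *v v = l *\<^sub>R v)"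

definition charpoly :: "real^'n^'n \<Rightarrow> real poly" where
  "charpoly M = det (\<chi> i j. (if i = j then [:0, 1:] else 0) - [: M $ i $ j :])"

definition simple_eigenvalue :: "real^'n^'n \<Rightarrow> real \<Rightarrow> bool" where
  "simple_eigenvalue M l \<longleftrightarrow> is_eigenvalue M l \<and> order l (charpoly M) = 1"

definition smallest_eigenvalue :: "real^'n^'n \<Rightarrow> real \<Rightarrow> bool" where
  "smallest_eigenvalue M l \<longleftrightarrow> is_eigenvalue M l \<and> (\<forall>m. is_eigenvalue M m \<longrightarrow> l \<le> m)"

definition walk :: "('n \<Rightarrow> 'n \<Rightarrow> bool) \<Rightarrow> 'n list \<Rightarrow> bool" where
  "walk E ys \<longleftrightarrow> length ys \<ge> 2 \<and> (\<forall>j. Suc j < length ys \<longrightarrow> E (ys ! j) (ys ! Suc j))"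

definition s_walk :: "('n \<Rightarrow> 'n \<Rightarrow> bool) \<Rightarrow> ('n \<Rightarrow> 'n \<Rightarrow> real) \<Rightarrow> ('n \<Rightarrow> real) \<Rightarrow> 'n list \<Rightarrow> bool" where
  "s_walk E sg f ys \<longleftrightarrow> walk E ys \<and>
     (\<forall>j. Suc j < length ys \<longrightarrow> f (ys ! j) * sg (ys ! j) (ys ! Suc j) * f (ys ! Suc j) > 0)"

definition strong_rel :: "('n \<Rightarrow> 'n \<Rightarrow> bool) \<Rightarrow> ('n \<Rightarrow> 'n \<Rightarrow> real) \<Rightarrow> ('n \<Rightarrow> real) \<Rightarrow> ('n \<times> 'n) set" where
  "strong_rel E sg f = {(x, y). f x \<noteq> 0 \<and> f y \<noteq> 0 \<and>
      (x = y \<or> (\<exists>ys. s_walk E sg f ys \<and> hd ys = x \<and> last ys = y))}"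

text \<open>Vertex sets of the strong nodal domains (each nodal domain is the induced subgraph on one of these).\<close>
definition strong_nodal_domains :: "('n \<Rightarrow> 'n \<Rightarrow> bool) \<Rightarrow> ('n \<Rightarrow> 'n \<Rightarrow> real) \<Rightarrow> ('n \<Rightarrow> real) \<Rightarrow> 'n set set" where
  "strong_nodal_domains E sg f = {x. f x \<noteq> 0} // strong_rel E sg f"

definition num_strong_nodal_domains :: "('n \<Rightarrow> 'n \<Rightarrow> bool) \<Rightarrow> ('n \<Rightarrow> 'n \<Rightarrow> real) \<Rightarrow> ('n \<Rightarrow> real) \<Rightarrow> nat" where
  "num_strong_nodal_domains E sg f = card (strong_nodal_domains E sg f)"

end

theory Submission
  imports Defs
begin

text \<open>Choose signs \<open>s x \<in> {-1, 1}\<close> such that the balanced edges, those with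
  \<open>s x * sg x y * s y = 1\<close>, connect the graph: a vertex adjacent to the current balanced
  component can always be re-signed so that it joins it. Give the balanced edges weight \<open>W\<close>
  and the other edges weight \<open>-1\<close>, and let \<open>M = S L S\<close> with \<open>S = diag s\<close> and \<open>L\<close>
  the weighted Laplacian. Then \<open>M s = 0\<close>, and the quadratic form of \<open>M\<close> at \<open>v\<close> is the
  weighted sum of the squares \<open>(s x * v x - s y * v y)\<^sup>2\<close> over the edges. Along paths of
  balanced edges every such square is bounded by a fixed multiple of the balanced part, so for
  large \<open>W\<close> the matrix \<open>M\<close> is positive semidefinite with kernel spanned by \<open>s\<close>. Hence 0 is
  the smallest eigenvalue, and it is a simple root of the characteristic polynomial \<open>p\<close>: by
  Cramer's rule \<open>s r * p t = t * det (D t)\<close>, where \<open>D t\<close> is \<open>t I - M\<close> with column \<open>r\<close>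
  replaced by \<open>s\<close>, and \<open>D 0\<close> is nonsingular because the kernel of \<open>M\<close> is one-dimensional.
  Finally \<open>s\<close> has no zeros and \<open>s x * sg x y * s y > 0\<close> on balanced edges, so S-walks
  join any two vertices and there is a single strong nodal domain.\<close>

section \<open>Switching to a connected balanced subgraph\<close>

definition balanced_edge ::
    "('n \<Rightarrow> 'n \<Rightarrow> bool) \<Rightarrow> ('n \<Rightarrow> 'n \<Rightarrow> real) \<Rightarrow> ('n \<Rightarrow> real) \<Rightarrow> 'n \<Rightarrow> 'n \<Rightarrow> bool" where
  "balanced_edge E sg s i j \<longleftrightarrow> E i j \<and> s i * sg i j * s j = 1"

lemma sign_mult_self: "s \<in> {-1, 1} \<Longrightarrow> s * s = (1::real)"
  by auto

lemma rtranclp_exits_set: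
  assumes "P\<^sup>*\<^sup>* a b" "a \<in> R" "b \<notin> R"
  shows "\<exists>u v. P u v \<and> u \<in> R \<and> v \<notin> R"
  using assms by (induction rule: rtranclp_induct) auto

lemma switching_extends_balanced_component:
  fixes E :: "'n::finite \<Rightarrow> 'n \<Rightarrow> bool"
  assumes sgr: "signed_graph E sg" and conn: "connected_graph E"
  shows "r \<in> R \<Longrightarrow> \<forall>i. s i \<in> {-1, 1} \<Longrightarrow>
    \<forall>v\<in>R. (\<lambda>a b. balanced_edge E sg s a b \<and> a \<in> R \<and> b \<in> R)\<^sup>*\<^sup>* r v \<Longrightarrow>
    \<exists>s'. (\<forall>i. s' i \<in> {-1, 1}) \<and> (\<forall>v. (balanced_edge E sg s')\<^sup>*\<^sup>* r v)"
proof (induction "card (- R)" arbitrary: R s rule: less_induct)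
  case less
  show ?case
  proof (cases "R = UNIV")
    case True
    with less.prems show ?thesis by (metis (mono_tags, lifting) UNIV_I mono_rtranclp)
  next
    case False
    then obtain b where "b \<notin> R" by blast
    moreover have "E\<^sup>*\<^sup>* r b" using conn unfolding connected_graph_def by blast
    ultimately obtain u v where uv: "E u v" "u \<in> R" "v \<notin> R"
      using rtranclp_exits_set \<open>r \<in> R\<close> by metis
    then have "u \<noteq> v" by blast
    define s' where "s' = s(v := s u * sg u v)"
    have sg_uv: "sg u v \<in> {-1, 1}" using sgr uv(1) unfolding signed_graph_def by auto
    have s': "\<forall>i. s' i \<in> {-1, 1}" using less.prems(2) sg_uv unfolding s'_def by auto
    let ?B = "\<lambda>a b. balanced_edge E sg s a b \<and> a \<in> R \<and> b \<in> R"
    let ?B' = "\<lambda>a b. balanced_edge E sg s' a b \<and> a \<in> insert v R \<and> b \<in> insert v R"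
    have "?B a b \<longrightarrow> ?B' a b" for a b
      using uv(3) unfolding balanced_edge_def s'_def by auto
    then have reach: "?B'\<^sup>*\<^sup>* r w" if "w \<in> R" for w
      using mono_rtranclp[of ?B ?B'] less.prems(3) that by blast
    have "balanced_edge E sg s' u v"
      using uv(1) \<open>u \<noteq> v\<close> sign_mult_self[of "s u"] sign_mult_self[of "sg u v"] less.prems(2) sg_uv
      unfolding balanced_edge_def s'_def by (simp add: mult_ac)
    then have "?B'\<^sup>*\<^sup>* r v"
      using reach[OF uv(2)] uv(2) by (auto intro: rtranclp.rtrancl_into_rtrancl)
    with reach have "\<forall>w\<in>insert v R. ?B'\<^sup>*\<^sup>* r w" by blast
    moreover have "card (- insert v R) < card (- R)"
      using uv(3) by (intro psubset_card_mono) auto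
    ultimately show ?thesis using less.hyps less.prems(1) s' by blast
  qed
qed

lemma switching_balanced_connected:
  fixes E :: "'n::finite \<Rightarrow> 'n \<Rightarrow> bool"
  assumes "signed_graph E sg" and "connected_graph E"
  obtains s where "\<And>i. s i \<in> {-1, 1}" and "\<And>i j. (balanced_edge E sg s)\<^sup>*\<^sup>* i j"
proof -
  fix r :: 'n
  obtain s where s: "\<forall>i. s i \<in> {-1, 1}" "\<forall>v. (balanced_edge E sg s)\<^sup>*\<^sup>* r v"
    using switching_extends_balanced_component[OF assms, of r "{r}" "\<lambda>_. 1"] by auto
  have "symp (balanced_edge E sg s)"
    using assms(1) by (auto simp: symp_def balanced_edge_def signed_graph_def mult_ac)
  then have "(balanced_edge E sg s)\<^sup>*\<^sup>* i j" for i j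
    using s(2) by (meson rtranclp_trans sympD symp_rtranclp)
  with s(1) that show thesis by blast
qed

section \<open>Energy of a connected graph\<close>

definition edge_energy :: "('n::finite \<Rightarrow> 'n \<Rightarrow> bool) \<Rightarrow> ('n \<Rightarrow> real) \<Rightarrow> real" where
  "edge_energy G y = (\<Sum>a\<in>UNIV. \<Sum>b\<in>UNIV. if G a b then (y a - y b)\<^sup>2 else 0)"

lemma edge_energy_nonneg: "0 \<le> edge_energy G y"
  unfolding edge_energy_def by (intro sum_nonneg) auto

lemma edge_energy_ge_edge:
  assumes "G a b"
  shows "(y a - y b)\<^sup>2 \<le> edge_energy G y"
proof -
  let ?e = "\<lambda>a b. if G a b then (y a - y b)\<^sup>2 else 0"
  have "(y a - y b)\<^sup>2 \<le> (\<Sum>b\<in>UNIV. ?e a b)"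
    using assms member_le_sum[of b UNIV "?e a"] by simp
  also have "\<dots> \<le> (\<Sum>a\<in>UNIV. \<Sum>b\<in>UNIV. ?e a b)"
    by (rule member_le_sum) (auto intro: sum_nonneg)
  finally show ?thesis unfolding edge_energy_def .
qed

lemma rtranclp_diff_sq_le_energy:
  assumes "G\<^sup>*\<^sup>* i j"
  shows "\<exists>K\<ge>0. \<forall>y. (y i - y j)\<^sup>2 \<le> K * edge_energy G y"
  using assms
proof (induction rule: rtranclp_induct)
  case base
  show ?case by auto
next
  case (step j k)
  then obtain K where K: "K \<ge> 0" "\<And>y. (y i - y j)\<^sup>2 \<le> K * edge_energy G y" by blast
  have "(y i - y k)\<^sup>2 \<le> (2 * K + 2) * edge_energy G y" for y
  proof -
    have "(y i - y k)\<^sup>2 \<le> 2 * (y i - y j)\<^sup>2 + 2 * (y j - y k)\<^sup>2"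
      using zero_le_power2[of "(y i - y j) - (y j - y k)"] by (simp add: power2_eq_square algebra_simps)
    also have "\<dots> \<le> (2 * K + 2) * edge_energy G y"
      using K(2)[of y] edge_energy_ge_edge[of G j k y, OF step(2)] by (simp add: algebra_simps)
    finally show ?thesis .
  qed
  with K(1) show ?case by (intro exI[of _ "2 * K + 2"]) auto
qed

lemma connected_diff_sq_le_energy:
  fixes G :: "'n::finite \<Rightarrow> 'n \<Rightarrow> bool"
  assumes "\<And>i j. G\<^sup>*\<^sup>* i j"
  obtains K where "K \<ge> 0" and "\<And>i j y. (y i - y j)\<^sup>2 \<le> K * edge_energy G y"
proof -
  have "\<forall>p. \<exists>K\<ge>0. \<forall>y. (y (fst p) - y (snd p))\<^sup>2 \<le> K * edge_energy G y"
    using rtranclp_diff_sq_le_energy assms by blast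
  then obtain Kp where Kp: "\<And>p. Kp p \<ge> 0" "\<And>p y. (y (fst p) - y (snd p))\<^sup>2 \<le> Kp p * edge_energy G y"
    by metis
  define K where "K = (\<Sum>p\<in>UNIV. Kp p)"
  have "(y i - y j)\<^sup>2 \<le> K * edge_energy G y" for i j y
  proof -
    have "Kp (i, j) \<le> K"
      unfolding K_def by (rule member_le_sum) (use Kp(1) in auto)
    then have "Kp (i, j) * edge_energy G y \<le> K * edge_energy G y"
      by (intro mult_right_mono edge_energy_nonneg)
    with Kp(2)[of y "(i, j)"] show ?thesis by simp
  qed
  moreover have "K \<ge> 0" unfolding K_def by (intro sum_nonneg Kp(1))
  ultimately show thesis using that by blast
qed

lemma rtranclp_energy_zero_imp_eq:
  assumes "G\<^sup>*\<^sup>* i j" and "edge_energy G y = 0"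
  shows "y i = y j"
  using assms(1)
proof (induction rule: rtranclp_induct)
  case (step j k)
  with edge_energy_ge_edge[of G j k y, OF step(2)] assms(2) show ?case by simp
qed simp

lemma connected_energy_zero_imp_multiple_of_signs:
  fixes G :: "'n::finite \<Rightarrow> 'n \<Rightarrow> bool"
  assumes conn: "\<And>i j. G\<^sup>*\<^sup>* i j" and s: "\<And>i. s i \<in> {-1, 1}"
    and "edge_energy G (\<lambda>i. s i * x $ i) = 0"
  shows "\<exists>c. x = c *\<^sub>R (\<chi> i. s i)"
proof -
  fix r :: 'n
  have const: "s i * x $ i = s r * x $ r" for i
    using rtranclp_energy_zero_imp_eq[OF conn[of i r] assms(3)] by simp
  have "x = (s r * x $ r) *\<^sub>R (\<chi> i. s i)"
  proof (subst vec_eq_iff, intro allI)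
    fix i
    have "x $ i = s i * (s i * x $ i)"
      using sign_mult_self[OF s, of i] by (simp flip: mult.assoc)
    with const[of i] show "x $ i = ((s r * x $ r) *\<^sub>R (\<chi> i. s i)) $ i" by simp
  qed
  then show ?thesis by blast
qed

section \<open>The signed Laplacian\<close>

text \<open>For \<open>s\<close> with values in \<open>{-1, 1}\<close> this is \<open>S L S\<close>, where \<open>S = diag s\<close> and \<open>L\<close> is the
  Laplacian of the weights \<open>c\<close>.\<close>

definition signed_laplacian :: "('n::finite \<Rightarrow> 'n \<Rightarrow> real) \<Rightarrow> ('n \<Rightarrow> real) \<Rightarrow> real^'n^'n" where
  "signed_laplacian c s = (\<chi> i j. (if i = j then \<Sum>k\<in>UNIV. c i k else 0) - s i * s j * c i j)"

lemma signed_laplacian_symmetric: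
  assumes "\<And>i j. c i j = c j i"
  shows "symmetric_matrix (signed_laplacian c s)"
  unfolding symmetric_matrix_def signed_laplacian_def transpose_def
  by (simp add: vec_eq_iff assms mult_ac)

lemma signed_laplacian_mult_vec:
  "(signed_laplacian c s *v x) $ i = (\<Sum>j\<in>UNIV. c i j * (x $ i - s i * s j * x $ j))"
proof -
  have "(signed_laplacian c s *v x) $ i = (\<Sum>k\<in>UNIV. c i k) * x $ i - (\<Sum>j\<in>UNIV. s i * s j * c i j * x $ j)"
    by (simp add: matrix_vector_mult_def signed_laplacian_def left_diff_distrib sum_subtractf
        mult_delta_left)
  also have "\<dots> = (\<Sum>j\<in>UNIV. c i j * (x $ i - s i * s j * x $ j))"
    by (simp add: sum_distrib_left right_diff_distrib sum_subtractf mult_ac)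
  finally show ?thesis .
qed

lemma signed_laplacian_signs_in_kernel:
  assumes "\<And>i. s i * s i = 1"
  shows "signed_laplacian c s *v (\<chi> i. s i) = 0"
  by (simp add: vec_eq_iff signed_laplacian_mult_vec mult.assoc assms)

lemma sum_symmetric_weight_diff_sq:
  fixes c :: "'a \<Rightarrow> 'a \<Rightarrow> real"
  assumes "\<And>i j. c i j = c j i"
  shows "(\<Sum>i\<in>A. \<Sum>j\<in>A. c i j * (y i - y j)\<^sup>2) = 2 * (\<Sum>i\<in>A. \<Sum>j\<in>A. c i j * (y i * (y i - y j)))"
proof -
  have "(\<Sum>i\<in>A. \<Sum>j\<in>A. c i j * (y i - y j)\<^sup>2) =
      (\<Sum>i\<in>A. \<Sum>j\<in>A. c i j * (y i * (y i - y j))) + (\<Sum>i\<in>A. \<Sum>j\<in>A. c j i * (y j * (y j - y i)))"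
  proof -
    have "c i j * (y i - y j)\<^sup>2 = c i j * (y i * (y i - y j)) + c j i * (y j * (y j - y i))" for i j
      using assms[of j i] by (simp add: power2_eq_square algebra_simps)
    then show ?thesis by (simp add: sum.distrib)
  qed
  also have "(\<Sum>i\<in>A. \<Sum>j\<in>A. c j i * (y j * (y j - y i))) = (\<Sum>i\<in>A. \<Sum>j\<in>A. c i j * (y i * (y i - y j)))"
    by (rule sum.swap)
  finally show ?thesis by simp
qed

lemma signed_laplacian_quadratic_form:
  assumes "\<And>i j. c i j = c j i" and "\<And>i. s i * s i = 1"
  shows "2 * (x \<bullet> (signed_laplacian c s *v x)) = (\<Sum>i\<in>UNIV. \<Sum>j\<in>UNIV. c i j * (s i * x $ i - s j * x $ j)\<^sup>2)"
proof -
  have pointwise: "x $ i * (c i j * (x $ i - s i * s j * x $ j)) =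
      c i j * (s i * x $ i * (s i * x $ i - s j * x $ j))" for i j
    using assms(2)[of i] by (simp add: algebra_simps)
  have "x \<bullet> (signed_laplacian c s *v x) =
      (\<Sum>i\<in>UNIV. \<Sum>j\<in>UNIV. x $ i * (c i j * (x $ i - s i * s j * x $ j)))"
    by (simp add: inner_vec_def signed_laplacian_mult_vec sum_distrib_left)
  also have "\<dots> = (\<Sum>i\<in>UNIV. \<Sum>j\<in>UNIV. c i j * (s i * x $ i * (s i * x $ i - s j * x $ j)))"
    unfolding pointwise ..
  finally show ?thesis
    using sum_symmetric_weight_diff_sq[where A = UNIV and y = "\<lambda>i. s i * x $ i", OF assms(1)] by simp
qed

text \<open>On a balanced edge \<open>s i * s j = sg i j\<close>, on the other edges \<open>s i * s j = - sg i j\<close>;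
  so these weights give every off-diagonal entry of the signed Laplacian the sign required
  by \<open>sg\<close>, while a large \<open>W\<close> lets the balanced edges dominate its quadratic form.\<close>

definition balancing_weight ::
    "('n \<Rightarrow> 'n \<Rightarrow> bool) \<Rightarrow> ('n \<Rightarrow> 'n \<Rightarrow> real) \<Rightarrow> ('n \<Rightarrow> real) \<Rightarrow> real \<Rightarrow> 'n \<Rightarrow> 'n \<Rightarrow> real" where
  "balancing_weight E sg s W i j =
    (if balanced_edge E sg s i j then W else if E i j then -1 else 0)"

lemma balancing_weight_symmetric:
  assumes "signed_graph E sg"
  shows "balancing_weight E sg s W i j = balancing_weight E sg s W j i"
  using assms unfolding balancing_weight_def balanced_edge_def signed_graph_def by (auto simp: mult_ac)

lemma compatible_signed_laplacian_balancing_weight: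
  assumes sgr: "signed_graph E sg" and s: "\<And>i. s i \<in> {-1, 1}" and "W > 0"
  shows "compatible (signed_laplacian (balancing_weight E sg s W) s) E sg"
proof -
  let ?M = "signed_laplacian (balancing_weight E sg s W) s"
  have off_diag: "?M $ i $ j = - (s i * s j * balancing_weight E sg s W i j)" if "i \<noteq> j" for i j
    using that unfolding signed_laplacian_def by simp
  have weight_nonzero: "balancing_weight E sg s W i j \<noteq> 0 \<longleftrightarrow> E i j" for i j
    using \<open>W > 0\<close> unfolding balancing_weight_def balanced_edge_def by auto
  have "s i \<noteq> 0" for i using s[of i] by auto
  moreover have loopless: "E i j \<Longrightarrow> i \<noteq> j" for i j using sgr unfolding signed_graph_def by auto
  ultimately have "E i j \<longleftrightarrow> i \<noteq> j \<and> ?M $ i $ j \<noteq> 0" for i j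
    using off_diag[of i j] weight_nonzero[of i j] by auto
  moreover have "sg i j = - (?M $ i $ j / \<bar>?M $ i $ j\<bar>)" if "E i j" for i j
  proof -
    have "sg i j \<in> {-1, 1}" using sgr that unfolding signed_graph_def by auto
    then show ?thesis
      using that s[of i] s[of j] \<open>W > 0\<close> off_diag[OF loopless[OF that]]
      unfolding balancing_weight_def balanced_edge_def by (auto simp: abs_mult)
  qed
  ultimately show ?thesis unfolding compatible_def by blast
qed

lemma balancing_laplacian_energy_bound:
  fixes E :: "'n::finite \<Rightarrow> 'n \<Rightarrow> bool"
  assumes sgr: "signed_graph E sg" and s: "\<And>i. s i \<in> {-1, 1}"
    and K: "\<And>i j y. (y i - y j)\<^sup>2 \<le> K * edge_energy (balanced_edge E sg s) y"
    and W: "real CARD('n) ^ 2 * K + 1 \<le> W"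
  shows "edge_energy (balanced_edge E sg s) (\<lambda>i. s i * x $ i)
    \<le> 2 * (x \<bullet> (signed_laplacian (balancing_weight E sg s W) s *v x))"
proof -
  let ?G = "balanced_edge E sg s" and ?c = "balancing_weight E sg s W"
  define y where "y i = s i * x $ i" for i
  define T where "T = edge_energy ?G y"
  have "T \<ge> 0" unfolding T_def by (rule edge_energy_nonneg)
  have "(\<Sum>i\<in>UNIV. \<Sum>j\<in>UNIV. (y i - y j)\<^sup>2) \<le> (\<Sum>i\<in>(UNIV::'n set). \<Sum>j\<in>(UNIV::'n set). K * T)"
    unfolding T_def by (intro sum_mono K)
  also have "\<dots> = real CARD('n) ^ 2 * K * T" by (simp add: power2_eq_square)
  finally have "T \<le> W * T - (\<Sum>i\<in>UNIV. \<Sum>j\<in>UNIV. (y i - y j)\<^sup>2)"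
    using mult_right_mono[OF W \<open>T \<ge> 0\<close>] by (simp add: algebra_simps)
  also have "W * T - (\<Sum>i\<in>UNIV. \<Sum>j\<in>UNIV. (y i - y j)\<^sup>2) =
      (\<Sum>i\<in>UNIV. \<Sum>j\<in>UNIV. W * (if ?G i j then (y i - y j)\<^sup>2 else 0) - (y i - y j)\<^sup>2)"
    unfolding T_def edge_energy_def by (simp add: sum_subtractf sum_distrib_left)
  also have "\<dots> \<le> (\<Sum>i\<in>UNIV. \<Sum>j\<in>UNIV. ?c i j * (y i - y j)\<^sup>2)"
    by (intro sum_mono) (auto simp: balancing_weight_def)
  also have "\<dots> = 2 * (x \<bullet> (signed_laplacian ?c s *v x))"
    unfolding y_def
    by (rule signed_laplacian_quadratic_form[symmetric,
          OF balancing_weight_symmetric[OF sgr] sign_mult_self[OF s]])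
  finally show ?thesis unfolding T_def y_def .
qed

lemma exists_compatible_psd_matrix:
  fixes E :: "'n::finite \<Rightarrow> 'n \<Rightarrow> bool"
  assumes sgr: "signed_graph E sg" and s: "\<And>i. s i \<in> {-1, 1}"
    and conn: "\<And>i j. (balanced_edge E sg s)\<^sup>*\<^sup>* i j"
  obtains M :: "real^'n^'n"
  where "symmetric_matrix M" and "compatible M E sg" and "M *v (\<chi> i. s i) = 0"
    and "\<And>x. 0 \<le> x \<bullet> (M *v x)" and "\<And>x. x \<bullet> (M *v x) = 0 \<Longrightarrow> \<exists>c. x = c *\<^sub>R (\<chi> i. s i)"
proof -
  obtain K where "K \<ge> 0" and K: "\<And>i j y. (y i - y j)\<^sup>2 \<le> K * edge_energy (balanced_edge E sg s) y"
    using connected_diff_sq_le_energy[OF conn] by blast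
  define W where "W = real CARD('n) ^ 2 * K + 1"
  let ?M = "signed_laplacian (balancing_weight E sg s W) s"
  have "W > 0" unfolding W_def using \<open>K \<ge> 0\<close> by (simp add: add_nonneg_pos)
  have bound: "edge_energy (balanced_edge E sg s) (\<lambda>i. s i * x $ i) \<le> 2 * (x \<bullet> (?M *v x))" for x
    by (rule balancing_laplacian_energy_bound[OF sgr s K]) (simp add: W_def)
  have psd: "0 \<le> x \<bullet> (?M *v x)" for x
    using bound[of x] edge_energy_nonneg[of "balanced_edge E sg s" "\<lambda>i. s i * x $ i"] by linarith
  have "\<exists>c. x = c *\<^sub>R (\<chi> i. s i)" if "x \<bullet> (?M *v x) = 0" for x
  proof (rule connected_energy_zero_imp_multiple_of_signs[OF conn s])
    show "edge_energy (balanced_edge E sg s) (\<lambda>i. s i * x $ i) = 0"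
      using bound[of x] edge_energy_nonneg[of "balanced_edge E sg s" "\<lambda>i. s i * x $ i"] that
      by linarith
  qed
  moreover have "symmetric_matrix ?M"
    by (intro signed_laplacian_symmetric balancing_weight_symmetric sgr)
  moreover have "compatible ?M E sg"
    by (rule compatible_signed_laplacian_balancing_weight[OF sgr s \<open>W > 0\<close>])
  moreover have "?M *v (\<chi> i. s i) = 0"
    by (rule signed_laplacian_signs_in_kernel[OF sign_mult_self[OF s]])
  ultimately show thesis using psd that by blast
qed

section \<open>A simple smallest eigenvalue\<close>

lemma psd_eigenvalue_nonneg:
  fixes M :: "real^'n^'n"
  assumes "\<And>x. 0 \<le> x \<bullet> (M *v x)" and "is_eigenvalue M m"
  shows "0 \<le> m"
proof -
  obtain v where "v \<noteq> 0" and "M *v v = m *\<^sub>R v"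
    using assms(2) unfolding is_eigenvalue_def by blast
  then have "0 \<le> m * (v \<bullet> v)" and "0 < v \<bullet> v"
    using assms(1)[of v] by auto
  then show ?thesis by (simp add: zero_le_mult_iff)
qed

lemma poly_det: "poly (det (X :: 'a::comm_ring_1 poly^'n^'n)) t = det (\<chi> i j. poly (X $ i $ j) t)"
  unfolding det_def by (simp add: poly_sum poly_prod)

lemma poly_charpoly: "poly (charpoly M) t = det (\<chi> i j. (if i = j then t else 0) - M $ i $ j)"
  unfolding charpoly_def poly_det by (simp add: if_distrib[of "\<lambda>p. poly p t"] cong: if_cong)

lemma det_replace_column_eigenvector:
  fixes N :: "'a::field^'n^'n"
  assumes "N *v f = t *s f"
  shows "f $ r * det N = t * det (\<chi> i j. if j = r then f $ i else N $ i $ j)"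
proof -
  let ?B = "\<chi> i j. if j = r then f $ i else N $ i $ j"
  have "?B *v axis r t = t *s f"
    by (simp add: vec_eq_iff matrix_vector_mult_def axis_def mult_delta_left mult_delta_right)
  then have "(\<chi> i j. if j = r then (N *v f) $ i else N $ i $ j) =
      (\<chi> i j. if j = r then (?B *v axis r t) $ i else ?B $ i $ j)"
    using assms by (simp add: vec_eq_iff)
  then have "f $ r * det N = axis r t $ r * det ?B"
    using cramer_lemma[of r N f] cramer_lemma[of r ?B "axis r t"] by simp
  then show ?thesis by (simp add: axis_def)
qed

lemma det_replace_column_kernel_nonzero:
  fixes M :: "real^'n^'n"
  assumes sym: "transpose M = M" and Mf: "M *v f = 0" and fr: "f $ r \<noteq> 0"
    and ker: "\<And>x. M *v x = 0 \<Longrightarrow> \<exists>c. x = c *\<^sub>R f"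
  shows "det (\<chi> i j. if j = r then f $ i else - M $ i $ j) \<noteq> 0"
proof -
  let ?D = "\<chi> i j. if j = r then f $ i else - M $ i $ j"
  have "x = 0" if "?D *v x = 0" for x
  proof -
    define x' where "x' = (\<chi> j. if j = r then 0 else x $ j)"
    have "(if j = r then f $ i else - M $ i $ j) * x $ j =
        (if j = r then x $ r * f $ i else 0) - M $ i $ j * x' $ j" for i j
      by (simp add: x'_def)
    then have "?D *v x = x $ r *\<^sub>R f - M *v x'"
      by (simp add: vec_eq_iff matrix_vector_mult_def sum_subtractf)
    with that have Mx': "M *v x' = x $ r *\<^sub>R f" by simp
    have "x $ r * (f \<bullet> f) = f \<bullet> (M *v x')" by (simp add: Mx')
    also have "\<dots> = (M *v f) \<bullet> x'"
      by (metis dot_lmul_matrix sym vector_transpose_matrix)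
    finally have "x $ r = 0" using Mf fr by (auto simp: vec_eq_iff)
    with Mx' obtain c where c: "x' = c *\<^sub>R f" using ker by auto
    have "c * f $ r = 0" using arg_cong[OF c, of "\<lambda>v. v $ r"] by (simp add: x'_def)
    then have "c = 0" using fr by simp
    with c \<open>x $ r = 0\<close> show "x = 0" by (auto simp: vec_eq_iff x'_def split: if_splits)
  qed
  then show ?thesis
    by (meson invertible_det_nz invertible_left_inverse matrix_left_invertible_ker)
qed

lemma order_zero_charpoly_eq_one:
  fixes M :: "real^'n^'n"
  assumes sym: "transpose M = M" and Mf: "M *v f = 0" and "f \<noteq> 0"
    and ker: "\<And>x. M *v x = 0 \<Longrightarrow> \<exists>c. x = c *\<^sub>R f"
  shows "order 0 (charpoly M) = 1"
proof -
  obtain r where fr: "f $ r \<noteq> 0" using \<open>f \<noteq> 0\<close> by (auto simp: vec_eq_iff)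
  define D where
    "D = (\<chi> i j. if j = r then [:f $ i:] else (if i = j then [:0, 1:] else 0) - [:M $ i $ j:])"
  have factor: "smult (f $ r) (charpoly M) = [:0, 1:] * det D"
  proof (rule poly_eq_poly_eq_iff[THEN iffD1], rule ext)
    fix t
    have "(\<Sum>j\<in>UNIV. M $ i $ j * f $ j) = 0" for i
      using Mf by (simp add: vec_eq_iff matrix_vector_mult_def)
    then have "(\<chi> i j. (if i = j then t else 0) - M $ i $ j) *v f = t *s f"
      by (simp add: vec_eq_iff matrix_vector_mult_def left_diff_distrib sum_subtractf mult_delta_left)
    from det_replace_column_eigenvector[OF this, of r]
    show "poly (smult (f $ r) (charpoly M)) t = poly ([:0, 1:] * det D) t"
      by (simp add: poly_charpoly poly_det D_def if_distrib[of "\<lambda>p. poly p t"] cong: if_cong)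
  qed
  have "poly (det D) 0 = det (\<chi> i j. if j = r then f $ i else - M $ i $ j)"
    by (simp add: poly_det D_def if_distrib[of "\<lambda>p. poly p 0"] cong: if_cong)
  then have "poly (det D) 0 \<noteq> 0"
    using det_replace_column_kernel_nonzero[OF sym Mf fr ker] by simp
  then have "order 0 ([:0, 1:] * det D) = 1"
    using order_power_n_n[of 0 1] by (subst order_mult) (auto simp: order_0I)
  with factor show ?thesis by (metis fr order_smult)
qed

lemma psd_line_kernel_smallest_simple_eigenvalue:
  fixes M :: "real^'n^'n"
  assumes "symmetric_matrix M" and "M *v f = 0" and "f \<noteq> 0"
    and psd: "\<And>x. 0 \<le> x \<bullet> (M *v x)" and ker: "\<And>x. x \<bullet> (M *v x) = 0 \<Longrightarrow> \<exists>c. x = c *\<^sub>R f"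
  shows "smallest_eigenvalue M 0" and "simple_eigenvalue M 0"
proof -
  have "is_eigenvalue M 0" unfolding is_eigenvalue_def using assms(2,3) by auto
  then show "smallest_eigenvalue M 0"
    unfolding smallest_eigenvalue_def using psd_eigenvalue_nonneg[OF psd] by blast
  have "order 0 (charpoly M) = 1"
    using assms(1,2,3) ker by (intro order_zero_charpoly_eq_one) (auto simp: symmetric_matrix_def)
  with \<open>is_eigenvalue M 0\<close> show "simple_eigenvalue M 0" unfolding simple_eigenvalue_def by blast
qed

section \<open>Strong nodal domains\<close>

lemma tranclp_imp_successively:
  assumes "P\<^sup>+\<^sup>+ x y"
  shows "\<exists>ys. 2 \<le> length ys \<and> hd ys = x \<and> last ys = y \<and> successively P ys"
  using assms
proof (induction rule: converse_tranclp_induct)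
  case (base x)
  then show ?case by (intro exI[of _ "[x, y]"]) auto
next
  case (step x z)
  then obtain ys where "2 \<le> length ys" "hd ys = z" "last ys = y" "successively P ys" by blast
  with step(1) show ?case by (intro exI[of _ "x # ys"]) (auto simp: successively_Cons)
qed

lemma s_walk_iff_successively:
  "s_walk E sg f ys \<longleftrightarrow> 2 \<le> length ys \<and> successively (\<lambda>a b. E a b \<and> 0 < f a * sg a b * f b) ys"
  unfolding s_walk_def walk_def successively_conv_nth by blast

lemma strong_nodal_domains_eq_UNIV:
  assumes nz: "\<And>x. f x \<noteq> 0" and conn: "\<And>x y. (\<lambda>a b. E a b \<and> 0 < f a * sg a b * f b)\<^sup>*\<^sup>* x y"
  shows "strong_nodal_domains E sg f = {UNIV}"
proof -
  have "(x, y) \<in> strong_rel E sg f" for x y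
  proof (cases "x = y")
    case False
    with conn[of x y] have "(\<lambda>a b. E a b \<and> 0 < f a * sg a b * f b)\<^sup>+\<^sup>+ x y"
      by (meson rtranclpD)
    then obtain ys where "2 \<le> length ys" "hd ys = x" "last ys = y"
        and "successively (\<lambda>a b. E a b \<and> 0 < f a * sg a b * f b) ys"
      by (blast dest: tranclp_imp_successively)
    then have "s_walk E sg f ys" by (simp add: s_walk_iff_successively)
    with nz \<open>hd ys = x\<close> \<open>last ys = y\<close> show ?thesis unfolding strong_rel_def by auto
  qed (simp add: strong_rel_def nz)
  then have "strong_rel E sg f = UNIV" by auto
  moreover have "{x. f x \<noteq> 0} = UNIV" using nz by auto
  ultimately show ?thesis unfolding strong_nodal_domains_def by (auto simp: quotient_def)
qed

theorem theorem3p10: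
  fixes E :: "'n::finite \<Rightarrow> 'n \<Rightarrow> bool" and sg :: "'n \<Rightarrow> 'n \<Rightarrow> real"
  assumes "signed_graph E sg" and "connected_graph E"
  shows "\<exists>(M :: real^'n^'n) l1 f1.
           symmetric_matrix M \<and> compatible M E sg \<and>
           smallest_eigenvalue M l1 \<and> simple_eigenvalue M l1 \<and>
           f1 \<noteq> 0 \<and> M *v f1 = l1 *\<^sub>R f1 \<and> (\<forall>x. f1 $ x \<noteq> 0) \<and>
           num_strong_nodal_domains E sg (\<lambda>x. f1 $ x) = 1 \<and>
           strong_nodal_domains E sg (\<lambda>x. f1 $ x) = {UNIV}"
proof -
  obtain s where s: "\<And>i. s i \<in> {-1, 1}" and conn: "\<And>i j. (balanced_edge E sg s)\<^sup>*\<^sup>* i j"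
    using switching_balanced_connected[OF assms] by blast
  define f :: "real^'n" where "f = (\<chi> i. s i)"
  obtain M :: "real^'n^'n" where sym: "symmetric_matrix M" and comp: "compatible M E sg"
    and Mf: "M *v f = 0" and psd: "\<And>x. 0 \<le> x \<bullet> (M *v x)"
    and ker: "\<And>x. x \<bullet> (M *v x) = 0 \<Longrightarrow> \<exists>c. x = c *\<^sub>R f"
    using exists_compatible_psd_matrix[OF assms(1) s conn] unfolding f_def by blast
  have f_nonzero: "f $ x \<noteq> 0" for x using s[of x] by (auto simp: f_def)
  then have "f \<noteq> 0" by (auto simp: vec_eq_iff)
  have eig: "smallest_eigenvalue M 0" "simple_eigenvalue M 0"
    using psd_line_kernel_smallest_simple_eigenvalue[OF sym Mf \<open>f \<noteq> 0\<close> psd ker] by auto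
  have "(\<lambda>a b. E a b \<and> 0 < f $ a * sg a b * f $ b)\<^sup>*\<^sup>* x y" for x y
    using mono_rtranclp[of "balanced_edge E sg s"] conn by (auto simp: balanced_edge_def f_def)
  then have dom: "strong_nodal_domains E sg (\<lambda>x. f $ x) = {UNIV}"
    using strong_nodal_domains_eq_UNIV f_nonzero by blast
  then have "num_strong_nodal_domains E sg (\<lambda>x. f $ x) = 1"
    unfolding num_strong_nodal_domains_def by simp
  moreover have "M *v f = 0 *\<^sub>R f" using Mf by simp
  ultimately show ?thesis
    using sym comp eig \<open>f \<noteq> 0\<close> f_nonzero dom by blast
qed

end
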